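(* Fix $\boldsymbol{x}\in\mathcal{R}_r$ and consider the second-order cone program, in the variable $(\boldsymbol{u},d,t)\in\mathbb{R}^m\times\mathbb{R}\times\mathbb{R}$, $$\min\ t\quad\text{s.t.}\quad \Big\|E\begin{bmatrix}\boldsymbol{u}\\ d\end{bmatrix}\Big\|_2\le t,\qquad \hat{\dot V}(\boldsymbol{x},\boldsymbol{u})+m_r^V+\beta_r\sigma_r^V+\lambda V(\boldsymbol{x})\le d,\qquad \|A_r^h(\boldsymbol{x})\boldsymbol{u}+\boldsymbol{b}_r^h(\boldsymbol{x})\|_2\le \boldsymbol{c}_r^h(\boldsymbol{x})\boldsymbol{u}+d_r^h(\boldsymbol{x}),$$ with $E=\operatorname{diag}(1,\dots,1,\sqrt\rho)$. If the matrix $S_r^3(\boldsymbol{x})=A_r^h(\boldsymbol{x})^TA_r^h(\boldsymbol{x})-\boldsymbol{c}_r^h(\boldsymbol{x})^T\boldsymbol{c}_r^h(\boldsymbol{x})\in\mathbb{R}^{m\times m}$ is negative definite, then this program is feasible at $\boldsymbol{x}$.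
   Context: Setting: switching system $\dot{\boldsymbol{x}}=\sum_{r=1}^R\delta_r(f_r(\boldsymbol{x})+g_r(\boldsymbol{x})\boldsymbol{u})$, $\boldsymbol{x}\in\mathcal{X}\subset\mathbb{R}^n$, $\boldsymbol{u}\in\mathbb{R}^m$, with pairwise disjoint regions $\mathcal{R}_r$ covering $\mathcal{X}$ and $\delta_r$ the indicator of $\mathcal{R}_r$; nominal model $\dot{\boldsymbol{x}}=\hat f(\boldsymbol{x})+\hat g(\boldsymbol{x})\boldsymbol{u}$; continuously differentiable CLF $V$ and CBF $h$ with nominal derivative $\hat{\dot V}=L_{\hat f}V+L_{\hat g}V\boldsymbol{u}$; constants $\rho>0$, $\lambda>0$, $\beta_r>0$. Write $\boldsymbol{y}=[1,\boldsymbol{u}^T]^T$. For region $r$, Gaussian-process posteriors (zero prior mean, kernel $\boldsymbol{y}^T\operatorname{diag}(k_r^1(\boldsymbol{x},\boldsymbol{x}'),\dots,k_r^{m+1}(\boldsymbol{x},\boldsymbol{x}'))\boldsymbol{y}'$ with positive-definite base kernels, noise variance $\sigma_n^2>0$) give for the CLF residual a mean $m_r^V=\boldsymbol{\mu}_r^V(\boldsymbol{x})\boldsymbol{y}$ and standard deviation $\sigma_r^V=\sqrt{\boldsymbol{y}^T\Sigma_r^V(\boldsymbol{x})\boldsymbol{y}}$, and for the CBF residual a mean $\boldsymbol{\mu}_r^h(\boldsymbol{x})\boldsymbol{y}$ ($\boldsymbol{\mu}_r^h\in\mathbb{R}^{1\times(m+1)}$) and standard deviation $\sqrt{\boldsymbol{y}^T\Sigma_r^h(\boldsymbol{x})\boldsymbol{y}}$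 with posterior covariance matrix $\Sigma_r^h(\boldsymbol{x})=\Lambda_r(\boldsymbol{x},\boldsymbol{x})-\bar K_r(K_r+\sigma_n^2I)^{-1}\bar K_r^T$. Write $\mu_r^{h1}$ for the first entry and $\boldsymbol{\mu}_r^{hm}$ for the last $m$ entries of $\boldsymbol{\mu}_r^h$. Let $L_r$ satisfy $L_r^TL_r=\Sigma_r^h(\boldsymbol{x})$, with first column $\boldsymbol{l}_r^1$ and last $m$ columns $L_r^m$. Let $\boldsymbol{\varphi}_r^h=[L_{f_r}h-L_{\hat f}h,\ L_{g_r}h-L_{\hat g}h]\in\mathbb{R}^{1\times(m+1)}$ with first entry $\varphi_r^{hf}$ and last $m$ entries $\boldsymbol{\varphi}_r^{hg}$. Define $A_r^h=\beta_rL_r^m$, $\boldsymbol{b}_r^h=\beta_r\boldsymbol{l}_r^1$, $\boldsymbol{c}_r^h=\boldsymbol{\varphi}_r^{hg}+\boldsymbol{\mu}_r^{hm}$, $d_r^h=\varphi_r^{hf}+\mu_r^{h1}$. *)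

theory Defs
  imports "HOL-Analysis.Analysis"
begin

text \<open>Augmented input y = [1; u], indexed by unit + 'm (Inl () is the leading 1).\<close>
definition yvec :: "real^'m::finite \<Rightarrow> real^(unit + 'm)" where
  "yvec u = (\<chi> i. case i of Inl _ \<Rightarrow> 1 | Inr j \<Rightarrow> u $ j)"

definition Evec :: "real \<Rightarrow> real^'m \<Rightarrow> real \<Rightarrow> real^('m + unit)" where
  "Evec \<rho> u d = (\<chi> i. case i of Inl j \<Rightarrow> u $ j | Inr _ \<Rightarrow> sqrt \<rho> * d)"

definition first_entry :: "real^(unit + 'm::finite) \<Rightarrow> real" where
  "first_entry v = v $ Inl ()"

definition last_entries :: "real^(unit + 'm::finite) \<Rightarrow> real^'m" where
  "last_entries v = (\<chi> j. v $ Inr j)"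

definition first_col :: "real^(unit + 'm::finite)^'k \<Rightarrow> real^'k" where
  "first_col L = (\<chi> i. L $ i $ Inl ())"

definition last_cols :: "real^(unit + 'm::finite)^'k \<Rightarrow> real^'m^'k" where
  "last_cols L = (\<chi> i j. L $ i $ Inr j)"

definition outer :: "real^'m \<Rightarrow> real^'m^'m" where
  "outer c = (\<chi> i j. c $ i * c $ j)"

definition neg_definite :: "real^'m^'m \<Rightarrow> bool" where
  "neg_definite S \<longleftrightarrow> (\<forall>v. v \<noteq> 0 \<longrightarrow> v \<bullet> (S *v v) < 0)"

end

theory Submission
  imports Defs
begin

text \<open>The decision variables d and t only appear as upper bounds, so the CLF and norm
  constraints are met by choosing them as the corresponding left-hand sides; the content lies in
  the CBF cone constraint \<open>\<parallel>A u + b\<parallel> \<le> c u + d\<^sub>0\<close>. Evaluating the negative definite form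
  \<open>A\<^sup>T A - c\<^sup>T c\<close> at \<open>c\<close> gives \<open>\<parallel>A c\<parallel> < c \<bullet> c\<close>, so along the ray \<open>u = s c\<close> the right-hand side
  grows strictly faster than the left-hand side and eventually dominates it.\<close>

lemma matrix_vector_mult_outer: "outer c *v v = (c \<bullet> v) *\<^sub>R c"
  by (simp add: vec_eq_iff outer_def matrix_vector_mult_def inner_vec_def
      sum_distrib_left mult.commute mult.left_commute)

lemma inner_gram_minus_outer:
  fixes A :: "real^'m^'k" and c v :: "real^'m"
  shows "v \<bullet> ((transpose A ** A - outer c) *v v) = (norm (A *v v))\<^sup>2 - (c \<bullet> v)\<^sup>2"
proof -
  have "(transpose A ** A - outer c) *v v = transpose A *v (A *v v) - (c \<bullet> v) *\<^sub>R c"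
    by (simp add: matrix_vector_mult_diff_rdistrib matrix_vector_mul_assoc matrix_vector_mult_outer)
  moreover have "v \<bullet> (transpose A *v w) = (A *v v) \<bullet> w" for w
    by (metis dot_lmul_matrix inner_commute vector_transpose_matrix)
  then have "v \<bullet> (transpose A *v (A *v v)) = (norm (A *v v))\<^sup>2"
    by (simp add: power2_norm_eq_inner)
  moreover have "v \<bullet> ((c \<bullet> v) *\<^sub>R c) = (c \<bullet> v)\<^sup>2"
    by (simp add: power2_eq_square inner_commute)
  ultimately show ?thesis
    by (simp only: inner_diff_right)
qed

lemma neg_definite_gram_minus_outer_imp_norm_less:
  fixes A :: "real^'m^'k" and c :: "real^'m"
  assumes "neg_definite (transpose A ** A - outer c)"
  shows "norm (A *v c) < c \<bullet> c"
proof -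
  have form_neg: "(norm (A *v v))\<^sup>2 < (c \<bullet> v)\<^sup>2" if "v \<noteq> 0" for v
    using assms that by (simp add: neg_definite_def inner_gram_minus_outer)
  have "c \<noteq> 0"
  proof
    assume "c = 0"
    obtain k :: 'm where True by blast
    have "(axis k 1 :: real^'m) \<noteq> 0" by (simp add: axis_eq_0_iff)
    from form_neg [OF this] \<open>c = 0\<close> show False by simp
  qed
  from form_neg [OF this] show ?thesis
    by (meson inner_ge_zero power_less_imp_less_base)
qed

lemma cone_constraint_feasible:
  fixes A :: "real^'m^'k" and b :: "real^'k" and c w :: "real^'m" and d\<^sub>0 :: real
  assumes "norm (A *v w) < c \<bullet> w"
  shows "\<exists>u. norm (A *v u + b) \<le> c \<bullet> u + d\<^sub>0"
proof -
  define s where "s = max 0 ((norm b - d\<^sub>0) / (c \<bullet> w - norm (A *v w)))"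
  have "s \<ge> 0" by (simp add: s_def)
  have "(norm b - d\<^sub>0) / (c \<bullet> w - norm (A *v w)) \<le> s" by (simp add: s_def)
  then have "norm b - d\<^sub>0 \<le> s * (c \<bullet> w - norm (A *v w))"
    using assms by (simp add: divide_le_eq mult.commute)
  have "norm (A *v (s *\<^sub>R w) + b) \<le> norm (s *\<^sub>R (A *v w)) + norm b"
    unfolding matrix_vector_mult_scaleR by (rule norm_triangle_ineq)
  also have "\<dots> = s * norm (A *v w) + norm b"
    using \<open>s \<ge> 0\<close> by simp
  also have "\<dots> \<le> c \<bullet> (s *\<^sub>R w) + d\<^sub>0"
    using \<open>norm b - d\<^sub>0 \<le> s * (c \<bullet> w - norm (A *v w))\<close> by (simp add: algebra_simps)
  finally show ?thesis by blast
qed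

theorem corollary3:
  fixes \<X> :: "(real^'n) set"
    and Reg :: "nat \<Rightarrow> (real^'n) set" and nR :: nat and r :: nat
    and f :: "nat \<Rightarrow> real^'n \<Rightarrow> real^'n" and g :: "nat \<Rightarrow> real^'n \<Rightarrow> real^'m^'n"
    and fhat :: "real^'n \<Rightarrow> real^'n" and ghat :: "real^'n \<Rightarrow> real^'m^'n"
    and V h :: "real^'n \<Rightarrow> real"
    and gradV gradh :: "real^'n \<Rightarrow> real^'n"
    and \<rho> lam :: real and \<beta> :: "nat \<Rightarrow> real"
    and \<mu>V \<mu>h :: "nat \<Rightarrow> real^'n \<Rightarrow> real^(unit + 'm)"
    and \<Sigma>V \<Sigma>h :: "nat \<Rightarrow> real^'n \<Rightarrow> real^(unit + 'm)^(unit + 'm)"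
    and L :: "real^(unit + 'm)^(unit + 'm)"
    and x :: "real^'n"
  assumes regions_disj: "\<And>i j. i \<in> {1..nR} \<Longrightarrow> j \<in> {1..nR} \<Longrightarrow> i \<noteq> j \<Longrightarrow> Reg i \<inter> Reg j = {}"
    and regions_cover: "(\<Union>i\<in>{1..nR}. Reg i) = \<X>"
    and r_idx: "r \<in> {1..nR}"
    and x_in: "x \<in> Reg r"
    and V_C1: "\<forall>y. (V has_derivative (\<lambda>v. gradV y \<bullet> v)) (at y)" and V_cont: "continuous_on UNIV gradV"
    and h_C1: "\<forall>y. (h has_derivative (\<lambda>v. gradh y \<bullet> v)) (at y)" and h_cont: "continuous_on UNIV gradh"
    and rho_pos: "\<rho> > 0" and lambda_pos: "lam > 0" and beta_pos: "\<forall>i. \<beta> i > 0"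
    and L_fact: "transpose L ** L = \<Sigma>h r x"
    and S3_negdef:
      "neg_definite
         (transpose (\<beta> r *\<^sub>R last_cols L) ** (\<beta> r *\<^sub>R last_cols L)
          - outer ((\<chi> j. gradh x \<bullet> (column j (g r x)) - gradh x \<bullet> (column j (ghat x))) + last_entries (\<mu>h r x)))"
  shows "\<exists>(u::real^'m) (d::real) (t::real).
           norm (Evec \<rho> u d) \<le> t
         \<and> gradV x \<bullet> (fhat x) + gradV x \<bullet> (ghat x *v u) + \<mu>V r x \<bullet> yvec u
             + \<beta> r * sqrt (yvec u \<bullet> (\<Sigma>V r x *v yvec u)) + lam * V x \<le> d
         \<and> norm ((\<beta> r *\<^sub>R last_cols L) *v u + \<beta> r *\<^sub>R first_col L)
             \<le> ((\<chi> j. gradh x \<bullet> (column j (g r x)) - gradh x \<bullet> (column j (ghat x))) + last_entries (\<mu>h r x)) \<bullet> u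
               + ((gradh x \<bullet> (f r x) - gradh x \<bullet> (fhat x)) + first_entry (\<mu>h r x))"
proof -
  define c where "c = (\<chi> j. gradh x \<bullet> (column j (g r x)) - gradh x \<bullet> (column j (ghat x)))
    + last_entries (\<mu>h r x)"
  obtain u where cbf: "norm ((\<beta> r *\<^sub>R last_cols L) *v u + \<beta> r *\<^sub>R first_col L)
      \<le> c \<bullet> u + ((gradh x \<bullet> (f r x) - gradh x \<bullet> (fhat x)) + first_entry (\<mu>h r x))"
    using cone_constraint_feasible [OF neg_definite_gram_minus_outer_imp_norm_less]
      S3_negdef unfolding c_def by blast
  define d where "d = gradV x \<bullet> (fhat x) + gradV x \<bullet> (ghat x *v u) + \<mu>V r x \<bullet> yvec u
    + \<beta> r * sqrt (yvec u \<bullet> (\<Sigma>V r x *v yvec u)) + lam * V x"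
  have "norm (Evec \<rho> u d) \<le> norm (Evec \<rho> u d)" ..
  with cbf show ?thesis
    unfolding c_def d_def by blast
qed

end
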